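(* Let $\Gamma$ be an ordered abelian group and let $v:\mathcal{T}(\Gamma)\to\Gamma'\cup\{\infty\}$ be a valuation on the hyperfield $\mathcal{T}(\Gamma)$ with value group $\Gamma'$. Then there exists a convex subgroup $\Delta$ of $\Gamma$ such that $\Gamma/\Delta\simeq\Gamma'$ via an order-preserving group isomorphism.
   Context: A hyperfield is $(F,+,\cdot,0,1)$ with $+$ a multivalued operation making $(F,+,0)$ a canonical hypergroup (associative, commutative, unique inverses $-x$ with $0\in x+(-x)$, and $z\in x+y\Rightarrow y\in z+(-x)$), $(F,\cdot)$ commutative with $0$ absorbing, $x(y+z)=xy+xz$, and $F\setminus\{0\}$ an abelian group with neutral $1\neq0$. For an ordered abelian group $(\Gamma,+,<,0)$ and $\infty>\Gamma$ with $\gamma+\infty=\infty+\gamma=\infty$, $\mathcal{T}(\Gamma)$ is the hyperfield on $\Gamma\cup\{\infty\}$ with multiplication $+$, zero $\infty$, unit $0$, and hyperaddition $x\boxplus\infty=\infty\boxplus x=\{x\}$, $x\boxplus y=\{\min\{x,y\}\}$ for $x\neq y$, $x\boxplus x=\{z:x\le z\le\infty\}$. Valuation on a hyperfield $F$: a surjective map $v:F\to\Gamma'\cup\{\infty\}$ ($\Gamma'$ ordered abelian group) with $vx=\infty\iff x$ is the zero of $F$, $v(xy)=vx+vy$, $z\in x+y\Rightarrow vz\ge\min\{vx,vy\}$; its value group is the image of the non-zero elements. A subgroup $\Delta\le\Gamma$ is convex if $\delta_1<\gamma<\delta_2$ with $\delta_i\in\Delta$ implies $\gamma\in\Delta$;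 $\Gamma/\Delta$ is ordered by $x+\Delta\prec y+\Delta$ iff $x<y$ and $y-x\notin\Delta$. *)

theory Defs
  imports Main
begin

text \<open>The extended group \<open>\<Gamma> \<union> {\<infinity>}\<close> is modelled as \<open>'a option\<close>,
  with \<open>None\<close> playing the role of \<open>\<infinity>\<close> (greater than every element of \<open>\<Gamma>\<close>).\<close>

definition ext_le :: "'a::linorder option \<Rightarrow> 'a option \<Rightarrow> bool" where
  "ext_le x y = (case y of None \<Rightarrow> True
                  | Some b \<Rightarrow> (case x of None \<Rightarrow> False | Some a \<Rightarrow> a \<le> b))"

definition ext_min :: "'a::linorder option \<Rightarrow> 'a option \<Rightarrow> 'a option" where
  "ext_min x y = (if ext_le x y then x else y)"

text \<open>Addition extended by \<open>\<gamma> + \<infinity> = \<infinity> + \<gamma> = \<infinity>\<close>; this is also the multiplication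
  of the hyperfield \<open>\<T>(\<Gamma>)\<close>.\<close>
definition ext_add :: "'a::plus option \<Rightarrow> 'a option \<Rightarrow> 'a option" where
  "ext_add x y = (case x of None \<Rightarrow> None
                   | Some a \<Rightarrow> (case y of None \<Rightarrow> None | Some b \<Rightarrow> Some (a + b)))"

definition T_hyperadd :: "'a::linorder option \<Rightarrow> 'a option \<Rightarrow> 'a option set" where
  "T_hyperadd x y =
     (if y = None then {x}
      else if x = None then {y}
      else if x \<noteq> y then {ext_min x y}
      else {z. ext_le x z})"

text \<open>Valuation on the hyperfield \<open>\<T>(\<Gamma>)\<close> with values in \<open>\<Gamma>' \<union> {\<infinity>}\<close>;
  surjectivity makes the value group equal to all of \<open>\<Gamma>'\<close>.\<close>
definition T_valuation :: "('a::linordered_ab_group_add option \<Rightarrow> 'b::linordered_ab_group_add option) \<Rightarrow> bool" where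
  "T_valuation v \<longleftrightarrow>
     surj v \<and>
     (\<forall>x. v x = None \<longleftrightarrow> x = None) \<and>
     (\<forall>x y. v (ext_add x y) = ext_add (v x) (v y)) \<and>
     (\<forall>x y z. z \<in> T_hyperadd x y \<longrightarrow> ext_le (ext_min (v x) (v y)) (v z))"

definition subgroup_of :: "'a::ab_group_add set \<Rightarrow> bool" where
  "subgroup_of D \<longleftrightarrow> 0 \<in> D \<and> (\<forall>x\<in>D. \<forall>y\<in>D. x + y \<in> D) \<and> (\<forall>x\<in>D. - x \<in> D)"

definition convex_subgroup :: "'a::linordered_ab_group_add set \<Rightarrow> bool" where
  "convex_subgroup D \<longleftrightarrow> subgroup_of D \<and>
     (\<forall>d1\<in>D. \<forall>d2\<in>D. \<forall>g. d1 < g \<and> g < d2 \<longrightarrow> g \<in> D)"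

definition coset :: "'a::ab_group_add set \<Rightarrow> 'a \<Rightarrow> 'a set" where
  "coset D x = (\<lambda>d. x + d) ` D"

definition quot :: "'a::ab_group_add set \<Rightarrow> 'a set set" where
  "quot D = range (coset D)"

definition quot_less :: "'a::linordered_ab_group_add set \<Rightarrow> 'a set \<Rightarrow> 'a set \<Rightarrow> bool" where
  "quot_less D A B \<longleftrightarrow> (\<exists>x y. A = coset D x \<and> B = coset D y \<and> x < y \<and> y - x \<notin> D)"

definition quot_order_iso :: "'a::linordered_ab_group_add set \<Rightarrow> ('a set \<Rightarrow> 'b::linordered_ab_group_add) \<Rightarrow> bool" where
  "quot_order_iso D f \<longleftrightarrow>
     bij_betw f (quot D) (UNIV :: 'b set) \<and>
     (\<forall>x y. f (coset D (x + y)) = f (coset D x) + f (coset D y)) \<and>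
     (\<forall>A\<in>quot D. \<forall>B\<in>quot D. quot_less D A B \<longleftrightarrow> f A < f B)"

end

theory Submission
  imports Defs
begin

text \<open>On finite arguments a valuation of \<open>\<T>(\<Gamma>)\<close> is a surjective group homomorphism
  \<open>w : \<Gamma> \<rightarrow> \<Gamma>'\<close>, and it is monotone because \<open>b \<in> a \<boxplus> a\<close> whenever \<open>a \<le> b\<close>.
  The kernel of a monotone epimorphism of ordered groups is convex, and \<open>w\<close> induces
  the required order isomorphism \<open>\<Gamma>/ker w \<simeq> \<Gamma>'\<close>.\<close>

locale ordered_group_epi =
  fixes w :: "'a::linordered_ab_group_add \<Rightarrow> 'b::linordered_ab_group_add"
  assumes add: "w (a + b) = w a + w b"
    and mono: "a \<le> b \<Longrightarrow> w a \<le> w b"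
    and surj: "surj w"
begin

lemma zero [simp]: "w 0 = 0"
  using add[of 0 0] by simp

lemma minus: "w (- a) = - w a"
  using add[of a "- a"] by (simp add: eq_neg_iff_add_eq_0 add.commute)

lemma diff: "w (a - b) = w a - w b"
  using add[of a "- b"] minus[of b] by simp

lemma reflect_less: "w a < w b \<Longrightarrow> a < b"
  using mono by (meson not_le)

lemma convex_subgroup_kernel: "convex_subgroup (w -` {0})"
  unfolding convex_subgroup_def subgroup_of_def
  using add minus mono by (auto intro: order.antisym less_imp_le) (metis less_imp_le order.antisym)

lemma coset_kernel: "coset (w -` {0}) x = {z. w z = w x}"
proof (intro set_eqI iffI)
  fix z assume "z \<in> coset (w -` {0}) x"
  then show "z \<in> {z. w z = w x}" by (auto simp: coset_def add)
next
  fix z assume "z \<in> {z. w z = w x}"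
  then have "z = x + (z - x)" and "z - x \<in> w -` {0}" by (simp_all add: diff)
  then show "z \<in> coset (w -` {0}) x" unfolding coset_def by blast
qed

lemma coset_kernel_eq_iff: "coset (w -` {0}) x = coset (w -` {0}) y \<longleftrightarrow> w x = w y"
  by (auto simp: coset_kernel)

definition induced :: "'a set \<Rightarrow> 'b" where
  "induced A = w (SOME z. z \<in> A)"

lemma induced_coset [simp]: "induced (coset (w -` {0}) x) = w x"
proof -
  have "x \<in> coset (w -` {0}) x" by (simp add: coset_kernel)
  then have "(SOME z. z \<in> coset (w -` {0}) x) \<in> coset (w -` {0}) x" by (rule someI)
  then show ?thesis by (simp add: induced_def coset_kernel)
qed

lemma quot_less_kernel_iff:
  "quot_less (w -` {0}) (coset (w -` {0}) x) (coset (w -` {0}) y) \<longleftrightarrow> w x < w y"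
proof
  assume "quot_less (w -` {0}) (coset (w -` {0}) x) (coset (w -` {0}) y)"
  then obtain a b where "w a = w x" "w b = w y" "a < b" "w (b - a) \<noteq> 0"
    unfolding quot_less_def coset_kernel_eq_iff by auto
  then show "w x < w y" using mono[of a b] by (simp add: diff order_le_less)
next
  assume "w x < w y"
  then have "x < y" and "y - x \<notin> w -` {0}" by (simp_all add: reflect_less diff)
  then show "quot_less (w -` {0}) (coset (w -` {0}) x) (coset (w -` {0}) y)"
    unfolding quot_less_def by blast
qed

lemma quot_order_iso_induced: "quot_order_iso (w -` {0}) induced"
  unfolding quot_order_iso_def
proof (intro conjI allI ballI)
  show "bij_betw induced (quot (w -` {0})) UNIV"
    unfolding bij_betw_def inj_on_def quot_def
    using coset_kernel_eq_iff surj by (auto simp: image_iff) (metis surjD)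
  show "induced (coset (w -` {0}) (x + y)) = induced (coset (w -` {0}) x) + induced (coset (w -` {0}) y)"
    for x y by (simp add: add)
  show "quot_less (w -` {0}) A B \<longleftrightarrow> induced A < induced B"
    if "A \<in> quot (w -` {0})" "B \<in> quot (w -` {0})" for A B
    using that quot_less_kernel_iff unfolding quot_def by auto
qed

end

lemma T_valuation_ordered_group_epi:
  assumes "T_valuation v"
  shows "ordered_group_epi (\<lambda>a. the (v (Some a)))"
proof -
  define w where "w a = the (v (Some a))" for a
  have v_Some: "v (Some a) = Some (w a)" for a
    using assms unfolding T_valuation_def w_def by (cases "v (Some a)") auto
  have "w (a + b) = w a + w b" for a b
  proof -
    have "v (ext_add (Some a) (Some b)) = ext_add (v (Some a)) (v (Some b))"
      using assms unfolding T_valuation_def by blast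
    then show ?thesis by (simp add: v_Some ext_add_def)
  qed
  moreover have "w a \<le> w b" if "a \<le> b" for a b
  proof -
    have "Some b \<in> T_hyperadd (Some a) (Some a)"
      using that by (simp add: T_hyperadd_def ext_le_def)
    then have "ext_le (ext_min (v (Some a)) (v (Some a))) (v (Some b))"
      using assms unfolding T_valuation_def by blast
    then show ?thesis by (simp add: v_Some ext_min_def ext_le_def)
  qed
  moreover have "surj w"
    unfolding surj_def
  proof
    fix c
    obtain x where x: "v x = Some c" using assms unfolding T_valuation_def by (metis surjD)
    then have "x \<noteq> None" using assms unfolding T_valuation_def by (metis option.distinct(1))
    then obtain a where "x = Some a" by blast
    with x show "\<exists>a. c = w a" using v_Some by auto
  qed
  ultimately show ?thesis unfolding w_def by unfold_locales auto
qed

theorem mainTheorem15: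
  fixes v :: "'a::linordered_ab_group_add option \<Rightarrow> 'b::linordered_ab_group_add option"
  assumes "T_valuation v"
  shows "\<exists>D :: 'a set. convex_subgroup D \<and> (\<exists>f :: 'a set \<Rightarrow> 'b. quot_order_iso D f)"
proof -
  interpret ordered_group_epi "\<lambda>a. the (v (Some a))"
    using assms by (rule T_valuation_ordered_group_epi)
  show ?thesis using convex_subgroup_kernel quot_order_iso_induced by blast
qed

end
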